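(* Let $A$ be a linear Nakayama algebra with $n$ simple modules, with vertices labelled $1,\dots,n$ so that the arrows are exactly $i\to i+1$ for $1\le i<n$. Then the Coxeter permutation of $A$ (with respect to this labelling) coincides with Ringel's homological permutation $\hat h$ of $A$.
   Context: A linear Nakayama algebra is $A=KQ/I$, $K$ a field, $Q$ the quiver $1\to 2\to\cdots\to n$ and $I$ an admissible ideal; it has finite global dimension. Modules are finitely generated right modules; $S(i)$, $P(i)$, $I(i)$ denote the simple, indecomposable projective and indecomposable injective modules at vertex $i$. The Cartan matrix $\phi_A$ has entries $\phi_{i,j}=\dim_K e_jAe_i$; the Coxeter matrix is $C_A=-\phi_A^T\phi_A^{-1}$. A Bruhat decomposition of an invertible matrix $M$ is $M=U_1PU_2$ with $U_1,U_2$ invertible upper triangular and $P$ a permutation matrix (uniquely determined). The Coxeter permutation is $p_c$ with $p_c(i)=j$ if the nonzero entry in column $i$ of $P$ (from $C_A=U_1PU_2$) lies in row $j$. Ringel's homological bijection: for a simple module $S$ with injective envelope $I(S)$, let $e(S)=\min\{\operatorname{pd} S,\operatorname{pd} I(S)\}$, let $NS=I(S)$ if $e(S)$ is even and $NS=S$ if $e(S)$ is odd, and set $h(S)=\operatorname{top}\Omega^{e(S)}(NS)$ (top of the $e(S)$-th syzygy). The homological permutation $\hat h$ of $\{1,\dots,n\}$ is defined by $\hat h(i)=j$ iff $h(S(i))\cong S(j)$. *)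

theory Defs
  imports "Jordan_Normal_Form.Matrix" "HOL-Combinatorics.Permutations"
begin

(* A linear Nakayama algebra A = KQ/I, Q = 1 -> 2 -> ... -> n, I admissible, is determined
   up to isomorphism by its Kupisch series c, where c i = dim_K P(i) = length of the
   indecomposable projective right module P(i) = e_i A.  With paths composed left to right,
   P(i) is uniserial with composition factors S(i), S(i+1), ..., S(i + c i - 1) (top S(i)).
   Admissibility of I means exactly: c n = 1, c i >= 2 for i < n, c (i+1) >= c i - 1. *)
definition linear_nakayama :: "nat \<Rightarrow> (nat \<Rightarrow> nat) \<Rightarrow> bool" where
  "linear_nakayama n c \<longleftrightarrow> 1 \<le> n \<and> c n = 1 \<and>
     (\<forall>i. 1 \<le> i \<and> i < n \<longrightarrow> 2 \<le> c i \<and> c i \<le> c (i + 1) + 1)"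

(* Indecomposable modules of A are the uniserial (interval) modules:
   the pair (a, b) with a \<le> b \<le> a + c a - 1 denotes the module P(a)/rad^(b-a+1) P(a),
   with composition factors S(a), ..., S(b), top S(a) and socle S(b).
   The zero module is represented by None. *)
type_synonym imod = "nat \<times> nat"

definition proj_end :: "(nat \<Rightarrow> nat) \<Rightarrow> nat \<Rightarrow> nat" where
  "proj_end c a = a + c a - 1"

definition simple_mod :: "nat \<Rightarrow> imod" where
  "simple_mod i = (i, i)"

definition top_vertex :: "imod \<Rightarrow> nat" where
  "top_vertex M = fst M"

(* injective envelope I(S(i)) = I(i): the uniserial module with socle S(i) of maximal length,
   i.e. (a, i) with a the least vertex such that S(i) is a composition factor of P(a) *)
definition inj_env_simple :: "(nat \<Rightarrow> nat) \<Rightarrow> nat \<Rightarrow> imod" where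
  "inj_env_simple c i = ((LEAST a. 1 \<le> a \<and> a \<le> i \<and> i \<le> proj_end c a), i)"

(* first syzygy: kernel of the projective cover P(a) -> (a, b) *)
definition syz :: "(nat \<Rightarrow> nat) \<Rightarrow> imod option \<Rightarrow> imod option" where
  "syz c M = (case M of None \<Rightarrow> None
      | Some (a, b) \<Rightarrow> (if b < proj_end c a then Some (b + 1, proj_end c a) else None))"

definition syzygy :: "(nat \<Rightarrow> nat) \<Rightarrow> nat \<Rightarrow> imod option \<Rightarrow> imod option" where
  "syzygy c k M = (syz c ^^ k) M"

definition proj_dim :: "(nat \<Rightarrow> nat) \<Rightarrow> imod \<Rightarrow> nat" where
  "proj_dim c M = (LEAST k. syzygy c (Suc k) (Some M) = None)"

definition e_val :: "(nat \<Rightarrow> nat) \<Rightarrow> nat \<Rightarrow> nat" where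
  "e_val c i = min (proj_dim c (simple_mod i)) (proj_dim c (inj_env_simple c i))"

definition N_mod :: "(nat \<Rightarrow> nat) \<Rightarrow> nat \<Rightarrow> imod" where
  "N_mod c i = (if even (e_val c i) then inj_env_simple c i else simple_mod i)"

(* h(S(i)) = top of Omega^{e(S(i))}(N S(i)); hhat i = j iff h(S(i)) = S(j) *)
definition hom_perm :: "nat \<Rightarrow> (nat \<Rightarrow> nat) \<Rightarrow> nat \<Rightarrow> nat" where
  "hom_perm n c i = (if 1 \<le> i \<and> i \<le> n
      then top_vertex (the (syzygy c (e_val c i) (Some (N_mod c i)))) else i)"

(* Matrices: vertex k (1 \<le> k \<le> n) corresponds to matrix index k - 1. *)

(* Cartan matrix: phi_{i,j} = dim_K e_j A e_i = multiplicity of S(i) in P(j) *)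
definition cartan :: "nat \<Rightarrow> (nat \<Rightarrow> nat) \<Rightarrow> rat mat" where
  "cartan n c = mat n n (\<lambda>(r, s). let i = r + 1; j = s + 1 in
      if j \<le> i \<and> i \<le> proj_end c j then 1 else 0)"

definition mat_inv :: "nat \<Rightarrow> rat mat \<Rightarrow> rat mat" where
  "mat_inv n M = (THE B. B \<in> carrier_mat n n \<and> inverts_mat M B \<and> inverts_mat B M)"

definition coxeter :: "nat \<Rightarrow> (nat \<Rightarrow> nat) \<Rightarrow> rat mat" where
  "coxeter n c = - (transpose_mat (cartan n c) * mat_inv n (cartan n c))"

definition perm_matrix :: "nat \<Rightarrow> (nat \<Rightarrow> nat) \<Rightarrow> rat mat" where
  "perm_matrix n p = mat n n (\<lambda>(r, s). if r + 1 = p (s + 1) then 1 else 0)"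

definition bruhat_perm :: "nat \<Rightarrow> rat mat \<Rightarrow> (nat \<Rightarrow> nat) \<Rightarrow> bool" where
  "bruhat_perm n M p \<longleftrightarrow> p permutes {1..n} \<and>
     (\<exists>U1 U2. U1 \<in> carrier_mat n n \<and> U2 \<in> carrier_mat n n \<and>
        upper_triangular U1 \<and> upper_triangular U2 \<and> invertible_mat U1 \<and> invertible_mat U2 \<and>
        M = U1 * perm_matrix n p * U2)"

definition coxeter_perm :: "nat \<Rightarrow> (nat \<Rightarrow> nat) \<Rightarrow> nat \<Rightarrow> nat" where
  "coxeter_perm n c = (THE p. bruhat_perm n (coxeter n c) p)"

end

theory Submission
  imports Defs "Jordan_Normal_Form.Determinant"
begin

(* Every indecomposable module is an interval, and the syzygies of the interval (x, y) run along
   the zigzag x, y, F x, F y, F^2 x, ..., where F u is the vertex one past the socle of P(u).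
   Comparing the zigzags of S(j) and I(j) shows that h(S(j)) is the least top of a last syzygy
   among the intervals with socle S(j) between I(j) and S(j).
   Let A be the matrix whose j-th column lists the alternating multiplicities of the projectives
   in the resolution of N S(j); then phi A = V, the upper unitriangular matrix of dimension
   vectors of the N S(j). Column j of A ends in row h(S(j)), so A = T P_h with T upper
   triangular and C_A = -phi^T phi^-1 = (-phi^T T) P_h V^-1 is a Bruhat decomposition.
   Injectivity of h comes from a linear functional, built from the F-orbits, that kills the
   columns of phi below h(S(j)) and the dimension vectors of N S(i) for i < j, but not that of
   N S(j). *)

section \<open>Triangular matrices and Bruhat decompositions\<close>

lemma sum_eq_single:
  assumes "finite A" "i \<in> A" "\<And>k. k \<in> A \<Longrightarrow> k \<noteq> i \<Longrightarrow> g k = 0"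
  shows "sum g A = g i"
  using sum.remove[OF assms(1,2), of g] sum.neutral[of "A - {i}" g] assms(3) by simp

lemma mult_mat_index_sum:
  assumes "A \<in> carrier_mat n m" "B \<in> carrier_mat m p" "i < n" "j < p"
  shows "(A * B) $$ (i, j) = (\<Sum>k<m. A $$ (i, k) * B $$ (k, j))"
  using assms by (simp add: scalar_prod_def lessThan_atLeast0)

lemma upper_triangular_mult:
  fixes A B :: "'a :: semiring_0 mat"
  assumes A: "A \<in> carrier_mat n n" and B: "B \<in> carrier_mat n n"
    and uA: "upper_triangular A" and uB: "upper_triangular B"
  shows "upper_triangular (A * B)"
proof
  fix i j assume ji: "j < i" and "i < dim_row (A * B)"
  then have i: "i < n" using A by simp
  have "A $$ (i, k) * B $$ (k, j) = 0" if "k < n" for k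
  proof (cases "k < i")
    case True then show ?thesis using upper_triangularD[OF uA True] A i by simp
  next
    case False then show ?thesis using upper_triangularD[OF uB, of j k] ji B that by simp
  qed
  then show "(A * B) $$ (i, j) = 0"
    using mult_mat_index_sum[OF A B i, of j] ji i by simp
qed

lemma upper_triangular_uminus:
  fixes A :: "'a :: group_add mat"
  assumes "A \<in> carrier_mat n n" "upper_triangular A"
  shows "upper_triangular (- A)"
  using assms unfolding upper_triangular_def by simp

lemma diag_mult_upper_triangular:
  fixes A B :: "'a :: semiring_0 mat"
  assumes A: "A \<in> carrier_mat n n" and B: "B \<in> carrier_mat n n"
    and uA: "upper_triangular A" and uB: "upper_triangular B" and i: "i < n"
  shows "(A * B) $$ (i, i) = A $$ (i, i) * B $$ (i, i)"
proof -
  have "A $$ (i, k) * B $$ (k, i) = 0" if "k < n" "k \<noteq> i" for k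
  proof (cases "k < i")
    case True then show ?thesis using upper_triangularD[OF uA True] A i by simp
  next
    case False
    then have "i < k" using that by simp
    then show ?thesis using upper_triangularD[OF uB] B that by simp
  qed
  then show ?thesis
    using mult_mat_index_sum[OF A B i i] sum_eq_single[of "{..<n}" i "\<lambda>k. A $$ (i, k) * B $$ (k, i)"] i
    by simp
qed

lemma upper_triangular_det_nonzero_iff:
  fixes U :: "'a :: idom mat"
  assumes "U \<in> carrier_mat n n" "upper_triangular U"
  shows "det U \<noteq> 0 \<longleftrightarrow> (\<forall>i<n. U $$ (i, i) \<noteq> 0)"
  using assms by (auto simp: det_upper_triangular diag_mat_def prod_list_zero_iff)

lemma invertible_mat_inverse:
  assumes A: "A \<in> carrier_mat n n" and "invertible_mat A"
  obtains B where "B \<in> carrier_mat n n" "A * B = 1\<^sub>m n" "B * A = 1\<^sub>m n" "invertible_mat B"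
proof -
  obtain B where AB: "A * B = 1\<^sub>m n" and BA: "B * A = 1\<^sub>m (dim_row B)"
    using assms unfolding invertible_mat_def inverts_mat_def by auto
  have B: "B \<in> carrier_mat n n"
    using arg_cong[OF AB, of dim_col] arg_cong[OF BA, of dim_col] A by auto
  then have "invertible_mat B"
    using AB BA A unfolding invertible_mat_def inverts_mat_def by auto
  then show ?thesis using that B AB BA by simp
qed

lemma invertible_mat_iff_det_nonzero:
  fixes A :: "'a :: field mat"
  assumes A: "A \<in> carrier_mat n n"
  shows "invertible_mat A \<longleftrightarrow> det A \<noteq> 0"
proof
  assume "invertible_mat A"
  then obtain B where "B \<in> carrier_mat n n" "A * B = 1\<^sub>m n"
    using invertible_mat_inverse[OF A] by metis
  then have "det A * det B = 1" using det_mult[OF A, of B] by simp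
  then show "det A \<noteq> 0" by auto
next
  assume "det A \<noteq> 0"
  then have "A \<in> Units (ring_mat TYPE('a) n undefined)" by (rule det_non_zero_imp_unit[OF A])
  then show "invertible_mat A"
    using A unfolding Units_def ring_mat_def invertible_mat_def inverts_mat_def by auto
qed

lemma upper_triangular_invertible_iff:
  fixes U :: "'a :: field mat"
  assumes "U \<in> carrier_mat n n" "upper_triangular U"
  shows "invertible_mat U \<longleftrightarrow> (\<forall>i<n. U $$ (i, i) \<noteq> 0)"
  unfolding invertible_mat_iff_det_nonzero[OF assms(1)] by (rule upper_triangular_det_nonzero_iff[OF assms])

lemma upper_triangular_inverse:
  fixes U :: "'a :: field mat"
  assumes U: "U \<in> carrier_mat n n" and uU: "upper_triangular U"
    and B: "B \<in> carrier_mat n n" and UB: "U * B = 1\<^sub>m n"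
  shows "upper_triangular B"
proof -
  have BU: "B * U = 1\<^sub>m n" by (rule mat_mult_left_right_inverse[OF U B UB])
  have "det U \<noteq> 0" using det_mult[OF U B] UB by auto
  then have diag: "U $$ (s, s) \<noteq> 0" if "s < n" for s
    using upper_triangular_det_nonzero_iff[OF U uU] that by blast
  have "B $$ (r, s) = 0" if "s < r" "r < n" for r s
    using that
  proof (induction s arbitrary: r rule: less_induct)
    case (less s)
    have "B $$ (r, k) * U $$ (k, s) = 0" if "k < n" "k \<noteq> s" for k
    proof (cases "k < s")
      case True then show ?thesis using less.IH[of k r] less.prems by simp
    next
      case False
      then have "s < k" using that by simp
      then show ?thesis using upper_triangularD[OF uU] U that by simp
    qed
    then have "(B * U) $$ (r, s) = B $$ (r, s) * U $$ (s, s)"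
      using mult_mat_index_sum[OF B U less.prems(2), of s] less.prems
        sum_eq_single[of "{..<n}" s "\<lambda>k. B $$ (r, k) * U $$ (k, s)"]
      by simp
    then show ?case using BU diag less.prems by simp
  qed
  then show ?thesis using B by (auto intro: upper_triangularI)
qed

lemma upper_triangular_inverse_exists:
  fixes U :: "'a :: field mat"
  assumes U: "U \<in> carrier_mat n n" and uU: "upper_triangular U"
    and diag: "\<And>i. i < n \<Longrightarrow> U $$ (i, i) \<noteq> 0"
  obtains B where "B \<in> carrier_mat n n" "upper_triangular B" "\<And>i. i < n \<Longrightarrow> B $$ (i, i) \<noteq> 0"
    "U * B = 1\<^sub>m n"
proof -
  have "invertible_mat U" using upper_triangular_invertible_iff[OF U uU] diag by blast
  then obtain B where B: "B \<in> carrier_mat n n" and UB: "U * B = 1\<^sub>m n"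
    using invertible_mat_inverse[OF U] by blast
  have uB: "upper_triangular B" by (rule upper_triangular_inverse[OF U uU B UB])
  have "U $$ (i, i) * B $$ (i, i) = 1" if "i < n" for i
    using diag_mult_upper_triangular[OF U B uU uB that] UB that by simp
  then have "B $$ (i, i) \<noteq> 0" if "i < n" for i
    using that by (metis mult_zero_right zero_neq_one)
  then show ?thesis using that B uB UB by blast
qed

lemma permutes_decreasing_eq_id:
  fixes \<sigma> :: "'a :: wellorder \<Rightarrow> 'a"
  assumes perm: "\<sigma> permutes S" and le: "\<And>i. i \<in> S \<Longrightarrow> \<sigma> i \<le> i"
  shows "\<sigma> = id"
proof
  fix i show "\<sigma> i = id i"
  proof (induction i rule: less_induct)
    case (less i)
    show ?case
    proof (rule ccontr)
      assume ne: "\<sigma> i \<noteq> id i"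
      then have "i \<in> S" using perm by (auto simp: permutes_def)
      then have "\<sigma> i < i" using le ne by (simp add: order_less_le)
      then have "\<sigma> (\<sigma> i) = \<sigma> i" using less by simp
      then show False using ne permutes_inj[OF perm] by (simp add: inj_eq)
    qed
  qed
qed

lemma perm_matrix_carrier [simp]: "perm_matrix n p \<in> carrier_mat n n"
  unfolding perm_matrix_def by simp

lemma mult_perm_matrix_index:
  assumes p: "p permutes {1..n}" and A: "A \<in> carrier_mat m n" and r: "r < m" and s: "s < n"
  shows "(A * perm_matrix n p) $$ (r, s) = A $$ (r, p (Suc s) - 1)"
proof -
  have "p (Suc s) \<in> {1..n}" using permutes_in_image[OF p] s by simp
  then have k: "p (Suc s) - 1 < n" "Suc (p (Suc s) - 1) = p (Suc s)" by auto
  have "(A * perm_matrix n p) $$ (r, s) = (\<Sum>k<n. A $$ (r, k) * perm_matrix n p $$ (k, s))"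
    by (rule mult_mat_index_sum[OF A perm_matrix_carrier r s])
  also have "\<dots> = A $$ (r, p (Suc s) - 1) * perm_matrix n p $$ (p (Suc s) - 1, s)"
    by (rule sum_eq_single) (use s k in \<open>auto simp: perm_matrix_def\<close>)
  also have "\<dots> = A $$ (r, p (Suc s) - 1)"
    using s k by (simp add: perm_matrix_def)
  finally show ?thesis .
qed

lemma perm_matrix_mult_index:
  assumes p: "p permutes {1..n}" and A: "A \<in> carrier_mat n m" and r: "r < n" and s: "s < m"
  shows "(perm_matrix n p * A) $$ (r, s) = A $$ (Hilbert_Choice.inv p (Suc r) - 1, s)"
proof -
  let ?k = "Hilbert_Choice.inv p (Suc r) - 1"
  have "Hilbert_Choice.inv p (Suc r) \<in> {1..n}" using permutes_in_image[OF permutes_inv[OF p]] r by simp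
  then have k: "?k < n" "Suc ?k = Hilbert_Choice.inv p (Suc r)" by auto
  have entry: "perm_matrix n p $$ (r, k) = of_bool (k = ?k)" if "k < n" for k
    using r that k(2) permutes_inverses[OF p] by (auto simp: perm_matrix_def)
  have "(perm_matrix n p * A) $$ (r, s) = (\<Sum>k<n. perm_matrix n p $$ (r, k) * A $$ (k, s))"
    by (rule mult_mat_index_sum[OF perm_matrix_carrier A r s])
  also have "\<dots> = perm_matrix n p $$ (r, ?k) * A $$ (?k, s)"
    by (rule sum_eq_single) (use k entry in auto)
  also have "\<dots> = A $$ (?k, s)"
    using k entry by simp
  finally show ?thesis .
qed

lemma perm_eq_of_perm_matrix_upper_triangular:
  assumes p: "p permutes {1..n}" and q: "q permutes {1..n}"
    and X: "X \<in> carrier_mat n n" and Y: "Y \<in> carrier_mat n n"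
    and diag: "\<And>i. i < n \<Longrightarrow> X $$ (i, i) \<noteq> 0" and uY: "upper_triangular Y"
    and eq: "X * perm_matrix n p = perm_matrix n q * Y"
  shows "p = q"
proof -
  let ?q' = "Hilbert_Choice.inv q"
  have "?q' (p i) \<le> i" if i: "i \<in> {1..n}" for i
  proof -
    define r s where "r = p i - 1" and "s = i - 1"
    have "p i \<in> {1..n}" using permutes_in_image[OF p] i by simp
    then have rs: "r < n" "s < n" "p (Suc s) = Suc r" using i by (auto simp: r_def s_def)
    have "?q' (Suc r) \<in> {1..n}" using permutes_in_image[OF permutes_inv[OF q]] rs by simp
    then have q'r: "Suc (?q' (Suc r) - 1) = ?q' (Suc r)" "?q' (Suc r) - 1 < n" by auto
    have "Y $$ (?q' (Suc r) - 1, s) = X $$ (r, r)"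
      using arg_cong[OF eq, of "\<lambda>M. M $$ (r, s)"] rs
      by (simp add: mult_perm_matrix_index[OF p X] perm_matrix_mult_index[OF q Y])
    then have "\<not> s < ?q' (Suc r) - 1"
      using diag[OF rs(1)] upper_triangularD[OF uY] Y q'r by fastforce
    then show ?thesis using rs q'r i unfolding s_def r_def by auto
  qed
  then have "?q' \<circ> p = id"
    using permutes_decreasing_eq_id[OF permutes_compose[OF p permutes_inv[OF q]]] by simp
  then show ?thesis using permutes_inverses(1)[OF q] by (metis comp_apply id_apply ext)
qed

lemma bruhat_perm_unique:
  fixes M :: "rat mat"
  assumes "bruhat_perm n M p" and "bruhat_perm n M q"
  shows "p = q"
proof -
  obtain U1 U2 where p: "p permutes {1..n}" and U: "U1 \<in> carrier_mat n n" "U2 \<in> carrier_mat n n"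
    and uU: "upper_triangular U1" "upper_triangular U2" and iU: "invertible_mat U1" "invertible_mat U2"
    and MU: "M = U1 * perm_matrix n p * U2"
    using assms(1) unfolding bruhat_perm_def by blast
  obtain W1 W2 where q: "q permutes {1..n}" and W: "W1 \<in> carrier_mat n n" "W2 \<in> carrier_mat n n"
    and uW: "upper_triangular W1" "upper_triangular W2" and iW: "invertible_mat W1"
    and MW: "M = W1 * perm_matrix n q * W2"
    using assms(2) unfolding bruhat_perm_def by blast
  obtain W1' where W1': "W1' \<in> carrier_mat n n" "W1 * W1' = 1\<^sub>m n" "W1' * W1 = 1\<^sub>m n" "invertible_mat W1'"
    using invertible_mat_inverse[OF W(1) iW] by blast
  obtain U2' where U2': "U2' \<in> carrier_mat n n" "U2 * U2' = 1\<^sub>m n"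
    using invertible_mat_inverse[OF U(2) iU(2)] by blast
  have uW1': "upper_triangular W1'" by (rule upper_triangular_inverse[OF W(1) uW(1) W1'(1,2)])
  have uU2': "upper_triangular U2'" by (rule upper_triangular_inverse[OF U(2) uU(2) U2'])
  have P: "perm_matrix n p \<in> carrier_mat n n" "perm_matrix n q \<in> carrier_mat n n" by simp_all
  have "(W1' * U1) * perm_matrix n p = W1' * M * U2'"
    unfolding MU using W1'(1) U U2' P
    by (simp add: assoc_mult_mat[of _ n n _ n _ n] mult_carrier_mat[of _ n n] right_mult_one_mat[OF P(1)])
  also have "\<dots> = (W1' * W1) * perm_matrix n q * (W2 * U2')"
    unfolding MW using W1'(1) W U2'(1) P
    by (simp add: assoc_mult_mat[of _ n n _ n _ n] mult_carrier_mat[of _ n n])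
  also have "\<dots> = perm_matrix n q * (W2 * U2')"
    using W1'(3) left_mult_one_mat[OF P(2)] by simp
  finally have eq: "(W1' * U1) * perm_matrix n p = perm_matrix n q * (W2 * U2')" .
  show ?thesis
  proof (rule perm_eq_of_perm_matrix_upper_triangular[OF p q _ _ _ _ eq])
    fix i assume i: "i < n"
    have "W1' $$ (i, i) \<noteq> 0" "U1 $$ (i, i) \<noteq> 0"
      using upper_triangular_invertible_iff[OF W1'(1) uW1'] upper_triangular_invertible_iff[OF U(1) uU(1)]
        W1'(4) iU(1) i by blast+
    then show "(W1' * U1) $$ (i, i) \<noteq> 0"
      using diag_mult_upper_triangular[OF W1'(1) U(1) uW1' uU(1) i] by simp
  qed (use W1'(1) U(1) W(2) U2'(1) upper_triangular_mult[OF W(2) U2'(1) uW(2) uU2'] in simp_all)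
qed

lemma bruhat_permI:
  fixes M :: "rat mat"
  assumes "p permutes {1..n}" and "M = U1 * perm_matrix n p * U2"
    and "U1 \<in> carrier_mat n n" "upper_triangular U1" "\<And>i. i < n \<Longrightarrow> U1 $$ (i, i) \<noteq> 0"
    and "U2 \<in> carrier_mat n n" "upper_triangular U2" "\<And>i. i < n \<Longrightarrow> U2 $$ (i, i) \<noteq> 0"
  shows "bruhat_perm n M p"
  using assms upper_triangular_invertible_iff unfolding bruhat_perm_def by blast

lemma upper_triangular_perm_matrix_factor:
  fixes A :: "rat mat"
  assumes A: "A \<in> carrier_mat n n" and p: "p permutes {1..n}"
    and below: "\<And>r s. r < n \<Longrightarrow> s < n \<Longrightarrow> p (Suc s) \<le> r \<Longrightarrow> A $$ (r, s) = 0"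
    and pivot: "\<And>s. s < n \<Longrightarrow> A $$ (p (Suc s) - 1, s) \<noteq> 0"
  obtains T where "T \<in> carrier_mat n n" "upper_triangular T" "\<And>i. i < n \<Longrightarrow> T $$ (i, i) \<noteq> 0"
    "A = T * perm_matrix n p"
proof
  let ?p' = "Hilbert_Choice.inv p"
  define T where "T = mat n n (\<lambda>(r, s). A $$ (r, ?p' (Suc s) - 1))"
  have p': "?p' (Suc s) - 1 < n" "p (Suc (?p' (Suc s) - 1)) = Suc s" if "s < n" for s
  proof -
    have "?p' (Suc s) \<in> {1..n}" using permutes_in_image[OF permutes_inv[OF p]] that by simp
    then show "?p' (Suc s) - 1 < n" "p (Suc (?p' (Suc s) - 1)) = Suc s"
      using permutes_inverses(1)[OF p] by (auto simp: Suc_pred)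
  qed
  show T: "T \<in> carrier_mat n n" unfolding T_def by simp
  show "upper_triangular T"
    using below p' unfolding T_def by (auto intro!: upper_triangularI)
  show "T $$ (i, i) \<noteq> 0" if "i < n" for i
    using pivot[OF p'(1)[OF that]] p'[OF that] that unfolding T_def by simp
  show "A = T * perm_matrix n p"
  proof (rule eq_matI)
    fix r s assume "r < dim_row (T * perm_matrix n p)" "s < dim_col (T * perm_matrix n p)"
    then have rs: "r < n" "s < n" using T by (simp_all add: perm_matrix_def)
    have "p (Suc s) \<in> {1..n}" using permutes_in_image[OF p] rs by simp
    then have k: "Suc (p (Suc s) - 1) = p (Suc s)" "p (Suc s) - 1 < n" by auto
    have "(T * perm_matrix n p) $$ (r, s) = T $$ (r, p (Suc s) - 1)"
      by (rule mult_perm_matrix_index[OF p T rs])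
    also have "\<dots> = A $$ (r, s)"
      using rs k unfolding T_def by (simp add: permutes_inverses(2)[OF p])
    finally show "A $$ (r, s) = (T * perm_matrix n p) $$ (r, s)" ..
  qed (use A T in \<open>simp_all add: perm_matrix_def\<close>)
qed

lemma mat_inv_eqI:
  fixes A :: "rat mat"
  assumes A: "A \<in> carrier_mat n n" and B: "B \<in> carrier_mat n n" and AB: "A * B = 1\<^sub>m n"
  shows "mat_inv n A = B"
  unfolding mat_inv_def
proof (rule the_equality)
  have "B * A = 1\<^sub>m n" by (rule mat_mult_left_right_inverse[OF A B AB])
  then show "B \<in> carrier_mat n n \<and> inverts_mat A B \<and> inverts_mat B A"
    using A B AB unfolding inverts_mat_def by simp
next
  fix B' assume "B' \<in> carrier_mat n n \<and> inverts_mat A B' \<and> inverts_mat B' A"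
  then have B': "B' \<in> carrier_mat n n" "B' * A = 1\<^sub>m n" unfolding inverts_mat_def by auto
  have "B' = B' * (A * B)" using AB B' by simp
  also have "\<dots> = (B' * A) * B" using assoc_mult_mat[OF B'(1) A B] by simp
  finally show "B' = B" using B'(2) B by simp
qed

lemma bruhat_perm_neg_transpose_mult_mat_inv:
  fixes C :: "rat mat"
  assumes C: "C \<in> carrier_mat n n" and uC: "upper_triangular (transpose_mat C)"
    and dC: "\<And>i. i < n \<Longrightarrow> C $$ (i, i) \<noteq> 0"
    and p: "p permutes {1..n}"
    and T: "T \<in> carrier_mat n n" "upper_triangular T" "\<And>i. i < n \<Longrightarrow> T $$ (i, i) \<noteq> 0"
    and V: "V \<in> carrier_mat n n" "upper_triangular V" "\<And>i. i < n \<Longrightarrow> V $$ (i, i) \<noteq> 0"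
    and CTV: "C * (T * perm_matrix n p) = V"
  shows "bruhat_perm n (- (transpose_mat C * mat_inv n C)) p"
proof -
  let ?P = "perm_matrix n p"
  obtain V' where V': "V' \<in> carrier_mat n n" "upper_triangular V'" "\<And>i. i < n \<Longrightarrow> V' $$ (i, i) \<noteq> 0"
    and VV': "V * V' = 1\<^sub>m n"
    using upper_triangular_inverse_exists[OF V] by blast
  have "C * (T * ?P * V') = 1\<^sub>m n"
    using assoc_mult_mat[OF C _ V'(1), of "T * ?P"] T(1) CTV VV' by simp
  then have inv: "mat_inv n C = T * ?P * V'"
    by (rule mat_inv_eqI[OF C mult_carrier_mat[OF mult_carrier_mat[OF T(1) perm_matrix_carrier] V'(1)]])
  have CT: "transpose_mat C \<in> carrier_mat n n" using C by simp
  have CTT: "transpose_mat C * T \<in> carrier_mat n n" using CT T(1) by simp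
  have "- (transpose_mat C * mat_inv n C) = - (transpose_mat C * T * ?P * V')"
    unfolding inv using CT T(1) V'(1)
    by (simp add: assoc_mult_mat[of _ n n _ n _ n] mult_carrier_mat[of _ n n])
  also have "\<dots> = - (transpose_mat C * T) * ?P * V'"
    using uminus_mult_left_mat[of "transpose_mat C * T" ?P] uminus_mult_left_mat[of "transpose_mat C * T * ?P" V']
      carrier_matD[OF CTT] carrier_matD[OF V'(1)] by (simp add: perm_matrix_def)
  finally have "- (transpose_mat C * mat_inv n C) = - (transpose_mat C * T) * ?P * V'" .
  moreover have "upper_triangular (- (transpose_mat C * T))"
    using upper_triangular_mult[OF CT T(1) uC T(2)] by (rule upper_triangular_uminus[OF CTT])
  moreover have "(- (transpose_mat C * T)) $$ (i, i) \<noteq> 0" if "i < n" for i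
    using diag_mult_upper_triangular[OF CT T(1) uC T(2) that] dC[OF that] T(3)[OF that] that C T(1)
    by simp
  ultimately show ?thesis
    using bruhat_permI[OF p] CTT V' by simp
qed

lemma sum_alternating_telescope:
  fixes g :: "nat \<Rightarrow> 'a :: comm_ring_1"
  shows "(\<Sum>k\<le>p. (-1) ^ k * (g k + g (Suc k))) = g 0 + (-1) ^ p * g (Suc p)"
  by (induction p) (simp_all add: algebra_simps)

section \<open>Syzygies of interval modules\<close>

locale lin_nakayama =
  fixes n :: nat and c :: "nat \<Rightarrow> nat"
  assumes linear_nakayama: "linear_nakayama n c"
begin

lemma proj_end_n: "proj_end c n = n"
  using linear_nakayama unfolding linear_nakayama_def proj_end_def by simp

lemma le_proj_end: "1 \<le> i \<Longrightarrow> i \<le> n \<Longrightarrow> i \<le> proj_end c i"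
  using linear_nakayama proj_end_n unfolding linear_nakayama_def proj_end_def
  by (cases "i = n") auto

lemma proj_end_mono:
  assumes "1 \<le> i" "i \<le> k" "k \<le> n"
  shows "proj_end c i \<le> proj_end c k"
  using assms(2,3)
proof (induction k rule: dec_induct)
  case (step k)
  then have "c k \<le> c (Suc k) + 1"
    using assms(1) linear_nakayama unfolding linear_nakayama_def by simp
  then have "proj_end c k \<le> proj_end c (Suc k)"
    unfolding proj_end_def by simp
  with step show ?case by simp
qed simp

lemma proj_end_le_n: "1 \<le> i \<Longrightarrow> i \<le> n \<Longrightarrow> proj_end c i \<le> n"
  using proj_end_mono[of i n] proj_end_n by simp

(* The map F; the junk values 0 and n + 1 outside 1..n make it monotone on all of nat. *)
definition past_proj :: "nat \<Rightarrow> nat" where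
  "past_proj u = (if u = 0 then 0 else if u \<le> n then proj_end c u + 1 else n + 1)"

lemma mono_past_proj: "mono past_proj"
  by (rule monoI) (auto simp: past_proj_def intro: proj_end_mono proj_end_le_n le_SucI)

lemma past_proj_eq: "1 \<le> u \<Longrightarrow> u \<le> n \<Longrightarrow> past_proj u = Suc (proj_end c u)"
  unfolding past_proj_def by simp

lemma less_past_proj: "1 \<le> u \<Longrightarrow> u \<le> n \<Longrightarrow> u < past_proj u"
  using le_proj_end past_proj_eq by fastforce

lemma past_proj_le: "past_proj u \<le> n + 1"
  using proj_end_le_n[of u] by (simp add: past_proj_def)

lemma one_le_past_proj: "1 \<le> u \<Longrightarrow> 1 \<le> past_proj u"
  by (simp add: past_proj_def)

lemma funpow_past_proj_le: "u \<le> n + 1 \<Longrightarrow> (past_proj ^^ i) u \<le> n + 1"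
  by (induction i) (simp_all add: past_proj_le[simplified])

lemma one_le_funpow_past_proj: "1 \<le> u \<Longrightarrow> 1 \<le> (past_proj ^^ i) u"
  by (induction i) (simp_all add: one_le_past_proj[simplified])

(* The pair (x, y) stands for the interval module (x, y - 1) with composition factors
   S(x), ..., S(y - 1); in this encoding the syzygy of (x, y) is (y, past_proj x). *)
definition is_module :: "nat \<Rightarrow> nat \<Rightarrow> bool" where
  "is_module x y \<longleftrightarrow> 1 \<le> x \<and> x \<le> n \<and> x < y \<and> y \<le> past_proj x"

(* Consecutive terms of the zigzag are the successive syzygies of (x, y). *)
definition zigzag :: "nat \<Rightarrow> nat \<Rightarrow> nat \<Rightarrow> nat" where
  "zigzag x y k = (if even k then (past_proj ^^ (k div 2)) x else (past_proj ^^ (k div 2)) y)"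

lemma zigzag_0 [simp]: "zigzag x y 0 = x"
  and zigzag_1 [simp]: "zigzag x y (Suc 0) = y"
  by (simp_all add: zigzag_def)

lemma zigzag_Suc_Suc: "zigzag x y (Suc (Suc k)) = past_proj (zigzag x y k)"
  by (simp add: zigzag_def)

lemma zigzag_even: "zigzag x y (2 * i) = (past_proj ^^ i) x"
  and zigzag_odd: "zigzag x y (Suc (2 * i)) = (past_proj ^^ i) y"
  by (simp_all add: zigzag_def)

context
  fixes x y assumes xy: "is_module x y"
begin

lemma zigzag_le_Suc: "zigzag x y k \<le> zigzag x y (Suc k)"
proof (cases "even k")
  case True
  then obtain i where k: "k = 2 * i" by (rule evenE)
  have "x \<le> y" using xy by (simp add: is_module_def)
  then show ?thesis
    unfolding k zigzag_even zigzag_odd by (rule funpow_mono[OF mono_past_proj])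
next
  case False
  then obtain i where k: "k = Suc (2 * i)" by (rule oddE) simp
  have "y \<le> past_proj x" using xy by (simp add: is_module_def)
  then have "(past_proj ^^ i) y \<le> (past_proj ^^ i) (past_proj x)"
    by (rule funpow_mono[OF mono_past_proj])
  then show ?thesis
    using zigzag_even[of x y "Suc i"] by (simp add: k zigzag_odd funpow_swap1)
qed

lemma mono_zigzag: "mono (zigzag x y)"
  by (rule monoI, rule lift_Suc_mono_le[of "zigzag x y"]) (use zigzag_le_Suc in auto)

lemma zigzag_bounds: "1 \<le> zigzag x y k" "zigzag x y k \<le> n + 1"
proof -
  have "1 \<le> x" "1 \<le> y" "x \<le> n + 1" "y \<le> n + 1"
    using xy past_proj_le[of x] by (auto simp: is_module_def)
  then show "1 \<le> zigzag x y k" "zigzag x y k \<le> n + 1"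
    using one_le_funpow_past_proj[of x] one_le_funpow_past_proj[of y]
      funpow_past_proj_le[of x] funpow_past_proj_le[of y]
    by (simp_all add: zigzag_def)
qed

lemma zigzag_stalls: "\<exists>k. zigzag x y (Suc k) = zigzag x y (Suc (Suc k))"
proof (rule ccontr)
  assume "\<not> ?thesis"
  then have less: "zigzag x y (Suc k) < zigzag x y (Suc (Suc k))" for k
    using zigzag_le_Suc[of "Suc k"] by (simp add: order_less_le)
  have "k + 1 \<le> zigzag x y (Suc k)" for k
  proof (induction k)
    case 0 show ?case using zigzag_bounds(1)[of 1] by simp
  next
    case (Suc k) then show ?case using less[of k] by simp
  qed
  from this[of "n + 1"] show False using zigzag_bounds(2)[of "Suc (n + 1)"] by simp
qed

end

definition pdim :: "nat \<Rightarrow> nat \<Rightarrow> nat" where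
  "pdim x y = (LEAST k. zigzag x y (Suc k) = zigzag x y (Suc (Suc k)))"

definition last_top :: "nat \<Rightarrow> nat \<Rightarrow> nat" where
  "last_top x y = zigzag x y (pdim x y)"

lemma pdim_le: "zigzag x y (Suc k) = zigzag x y (Suc (Suc k)) \<Longrightarrow> pdim x y \<le> k"
  unfolding pdim_def by (rule Least_le)

context
  fixes x y assumes xy: "is_module x y"
begin

lemma zigzag_stalls_at_pdim: "zigzag x y (Suc (pdim x y)) = zigzag x y (Suc (Suc (pdim x y)))"
  unfolding pdim_def by (rule LeastI_ex[OF zigzag_stalls[OF xy]])

lemma zigzag_less_Suc: "k \<le> pdim x y \<Longrightarrow> zigzag x y k < zigzag x y (Suc k)"
proof (cases k)
  case 0 then show ?thesis using xy by (simp add: is_module_def)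
next
  case (Suc k')
  assume "k \<le> pdim x y"
  then have "zigzag x y (Suc k') \<noteq> zigzag x y (Suc (Suc k'))"
    using not_less_Least[of k' "\<lambda>k. zigzag x y (Suc k) = zigzag x y (Suc (Suc k))"] Suc
    unfolding pdim_def by auto
  then show ?thesis using zigzag_le_Suc[OF xy, of k] Suc by simp
qed

lemma zigzag_strict_mono: "i < k \<Longrightarrow> k \<le> Suc (pdim x y) \<Longrightarrow> zigzag x y i < zigzag x y k"
proof (induction k rule: less_Suc_induct)
  case (1 i) then show ?case using zigzag_less_Suc by simp
next
  case (2 i j k) then show ?case by simp
qed

lemma zigzag_le_n: "k \<le> pdim x y \<Longrightarrow> zigzag x y k \<le> n"
  using zigzag_less_Suc[of k] zigzag_bounds[OF xy, of "Suc k"] by simp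

lemma last_top_bounds: "1 \<le> last_top x y" "last_top x y \<le> n"
  using zigzag_bounds[OF xy] zigzag_le_n unfolding last_top_def by simp_all

lemma syzygy_zigzag:
  "syzygy c k (Some (x, y - 1)) =
    (if k \<le> pdim x y then Some (zigzag x y k, zigzag x y (Suc k) - 1) else None)"
proof (induction k)
  case (Suc k)
  show ?case
  proof (cases "k \<le> pdim x y")
    case True
    have "1 \<le> zigzag x y k" "zigzag x y k \<le> n" "1 \<le> zigzag x y (Suc k)"
      using zigzag_bounds[OF xy] zigzag_le_n[OF True] by simp_all
    moreover have "zigzag x y (Suc k) < zigzag x y (Suc (Suc k)) \<longleftrightarrow> Suc k \<le> pdim x y"
      using zigzag_less_Suc[of "Suc k"] zigzag_stalls_at_pdim True le_Suc_eq by fastforce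
    ultimately show ?thesis
      using Suc True unfolding syzygy_def
      by (auto simp: syz_def zigzag_Suc_Suc past_proj_eq)
  qed (use Suc in \<open>simp add: syzygy_def syz_def\<close>)
qed (simp add: syzygy_def)

lemma proj_dim_eq_pdim: "proj_dim c (x, y - 1) = pdim x y"
  unfolding proj_dim_def syzygy_zigzag by (simp add: not_less_eq_eq Least_equality)

lemma top_last_syzygy: "top_vertex (the (syzygy c (pdim x y) (Some (x, y - 1)))) = last_top x y"
  unfolding syzygy_zigzag last_top_def top_vertex_def by simp

end

context
  fixes x x' y assumes xy: "is_module x y" and x'y: "is_module x' y" and x_le: "x \<le> x'"
begin

lemma zigzag_even_le: "zigzag x y (2 * i) \<le> zigzag x' y (2 * i)"
  unfolding zigzag_even using x_le by (rule funpow_mono[OF mono_past_proj])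

lemma pdim_le_of_even:
  assumes "even (pdim x' y)"
  shows "pdim x y \<le> pdim x' y"
proof -
  obtain i where i: "pdim x' y = 2 * i" using assms by (rule evenE)
  have "zigzag x y (2 * Suc i) \<le> zigzag x' y (2 * Suc i)" by (rule zigzag_even_le)
  also have "\<dots> = zigzag x' y (Suc (2 * i))"
    using zigzag_stalls_at_pdim[OF x'y] i by simp
  also have "\<dots> = zigzag x y (Suc (2 * i))" by (simp only: zigzag_odd)
  finally have "zigzag x y (Suc (2 * i)) = zigzag x y (Suc (Suc (2 * i)))"
    using zigzag_le_Suc[OF xy, of "Suc (2 * i)"] by simp
  then show ?thesis using pdim_le i by simp
qed

lemma pdim_le_of_odd:
  assumes "odd (pdim x y)"
  shows "pdim x' y \<le> pdim x y"
proof -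
  obtain i where i: "pdim x y = Suc (2 * i)" using assms by (rule oddE) simp
  have "zigzag x' y (Suc (2 * Suc i)) = zigzag x y (Suc (2 * Suc i))" by (simp only: zigzag_odd)
  also have "\<dots> = zigzag x y (2 * Suc i)"
    using zigzag_stalls_at_pdim[OF xy] i by simp
  also have "\<dots> \<le> zigzag x' y (2 * Suc i)" by (rule zigzag_even_le)
  finally have "zigzag x' y (Suc (Suc (2 * i))) = zigzag x' y (Suc (Suc (Suc (2 * i))))"
    using zigzag_le_Suc[OF x'y, of "Suc (Suc (2 * i))"] by simp
  then show ?thesis using pdim_le i by simp
qed

lemma last_top_le_of_even:
  assumes "even k" "pdim x y \<le> k" "k \<le> pdim x' y"
  shows "last_top x y \<le> last_top x' y"
proof -
  obtain i where i: "k = 2 * i" using assms(1) by (rule evenE)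
  have "last_top x y \<le> zigzag x y (2 * i)"
    unfolding last_top_def using assms(2) i by (intro monoD[OF mono_zigzag[OF xy]]) simp
  also have "\<dots> \<le> zigzag x' y (2 * i)" by (rule zigzag_even_le)
  also have "\<dots> \<le> last_top x' y"
    unfolding last_top_def using assms(3) i by (intro monoD[OF mono_zigzag[OF x'y]]) simp
  finally show ?thesis .
qed

lemma last_top_le_of_odd:
  assumes "odd k" "pdim x' y \<le> k" "k \<le> pdim x y"
  shows "last_top x' y \<le> last_top x y"
proof -
  obtain i where i: "k = Suc (2 * i)" using assms(1) by (rule oddE) simp
  have "last_top x' y \<le> zigzag x' y (Suc (2 * i))"
    unfolding last_top_def using assms(2) i by (intro monoD[OF mono_zigzag[OF x'y]]) simp
  also have "\<dots> = zigzag x y (Suc (2 * i))" by (simp only: zigzag_odd)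
  also have "\<dots> \<le> last_top x y"
    unfolding last_top_def using assms(3) i by (intro monoD[OF mono_zigzag[OF xy]]) simp
  finally show ?thesis .
qed

end

definition inj_top :: "nat \<Rightarrow> nat" where
  "inj_top j = fst (inj_env_simple c j)"

lemma inj_env_simple_eq: "inj_env_simple c j = (inj_top j, j)"
  unfolding inj_top_def inj_env_simple_def by simp

definition N_top :: "nat \<Rightarrow> nat" where
  "N_top j = fst (N_mod c j)"

lemma N_mod_eq: "N_mod c j = (N_top j, j)"
  unfolding N_top_def N_mod_def inj_env_simple_eq simple_mod_def by simp

context
  fixes j assumes j: "1 \<le> j" "j \<le> n"
begin

lemma inj_top_bounds: "1 \<le> inj_top j" "inj_top j \<le> j" "j \<le> proj_end c (inj_top j)"
proof -
  have "1 \<le> j \<and> j \<le> j \<and> j \<le> proj_end c j" using j le_proj_end by simp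
  then have "1 \<le> inj_top j \<and> inj_top j \<le> j \<and> j \<le> proj_end c (inj_top j)"
    unfolding inj_top_def inj_env_simple_def fst_conv by (rule LeastI)
  then show "1 \<le> inj_top j" "inj_top j \<le> j" "j \<le> proj_end c (inj_top j)" by simp_all
qed

lemma proj_end_less_of_less_inj_top:
  assumes "1 \<le> x" "x < inj_top j"
  shows "proj_end c x < j"
  using not_less_Least[of x "\<lambda>a. 1 \<le> a \<and> a \<le> j \<and> j \<le> proj_end c a"] assms inj_top_bounds
  unfolding inj_top_def inj_env_simple_def by auto

lemma is_module_socle:
  assumes "inj_top j \<le> x" "x \<le> j"
  shows "is_module x (Suc j)"
proof -
  have "j \<le> proj_end c x"
    using proj_end_mono[of "inj_top j" x] inj_top_bounds assms j by simp
  then show ?thesis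
    using assms inj_top_bounds j past_proj_eq[of x] unfolding is_module_def by simp
qed

lemma N_top_bounds: "inj_top j \<le> N_top j" "N_top j \<le> j"
  using inj_top_bounds
  unfolding N_top_def N_mod_def inj_env_simple_eq simple_mod_def by simp_all

lemma N_top_last_top:
  "e_val c j = pdim (N_top j) (Suc j)"
  "last_top (N_top j) (Suc j) = min (last_top (inj_top j) (Suc j)) (last_top j (Suc j))"
proof -
  let ?A = "inj_top j" and ?y = "Suc j"
  have A: "is_module ?A ?y" and J: "is_module j ?y" and Aj: "?A \<le> j"
    using is_module_socle inj_top_bounds by simp_all
  have e: "e_val c j = min (pdim ?A ?y) (pdim j ?y)"
    using proj_dim_eq_pdim[OF A] proj_dim_eq_pdim[OF J]
    unfolding e_val_def inj_env_simple_eq simple_mod_def by simp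
  have "e_val c j = pdim (N_top j) ?y \<and> last_top (N_top j) ?y = min (last_top ?A ?y) (last_top j ?y)"
  proof (cases "even (e_val c j)")
    case True
    then have "pdim ?A ?y \<le> pdim j ?y"
      using e pdim_le_of_even[OF A J Aj] by (cases "pdim ?A ?y \<le> pdim j ?y") auto
    moreover from this have "last_top ?A ?y \<le> last_top j ?y"
      using e True last_top_le_of_even[OF A J Aj] by simp
    moreover have "N_top j = ?A"
      using True unfolding N_top_def N_mod_def inj_env_simple_eq by simp
    ultimately show ?thesis using e by simp
  next
    case False
    then have "pdim j ?y \<le> pdim ?A ?y"
      using e pdim_le_of_odd[OF A J Aj] by (cases "pdim j ?y \<le> pdim ?A ?y") auto
    moreover from this have "last_top j ?y \<le> last_top ?A ?y"
      using e False last_top_le_of_odd[OF A J Aj] by simp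
    moreover have "N_top j = j"
      using False unfolding N_top_def N_mod_def simple_mod_def by simp
    ultimately show ?thesis using e by simp
  qed
  then show "e_val c j = pdim (N_top j) ?y"
    "last_top (N_top j) ?y = min (last_top ?A ?y) (last_top j ?y)" by simp_all
qed

lemma hom_perm_eq_last_top: "hom_perm n c j = last_top (N_top j) (Suc j)"
  using top_last_syzygy[OF is_module_socle[OF N_top_bounds]] j
  unfolding hom_perm_def N_top_last_top(1) N_mod_eq by simp

lemma hom_perm_le_last_top:
  assumes "inj_top j \<le> x" "x \<le> j"
  shows "hom_perm n c j \<le> last_top x (Suc j)"
proof -
  let ?A = "inj_top j" and ?y = "Suc j"
  have A: "is_module ?A ?y" and J: "is_module j ?y" and X: "is_module x ?y"
    using is_module_socle inj_top_bounds assms by simp_all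
  have "min (last_top ?A ?y) (last_top j ?y) \<le> last_top x ?y"
  proof (cases "even (pdim x ?y)")
    case True
    then have "last_top ?A ?y \<le> last_top x ?y"
      using last_top_le_of_even[OF A X assms(1) True] pdim_le_of_even[OF A X assms(1)] by simp
    then show ?thesis by simp
  next
    case False
    then have "last_top j ?y \<le> last_top x ?y"
      using last_top_le_of_odd[OF X J assms(2) False] pdim_le_of_odd[OF X J assms(2)] by simp
    then show ?thesis by simp
  qed
  then show ?thesis
    unfolding hom_perm_eq_last_top N_top_last_top(2) .
qed

lemma hom_perm_bounds: "1 \<le> hom_perm n c j" "hom_perm n c j \<le> n"
  using last_top_bounds[OF is_module_socle[OF N_top_bounds]] hom_perm_eq_last_top by simp_all

end

section \<open>Injectivity of the homological permutation\<close>

(* The second stopping condition only matters outside 1..n, where it ensures termination. *)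
function climb :: "nat \<Rightarrow> nat \<Rightarrow> nat" where
  "climb t x = (if t \<le> x \<or> past_proj x \<le> x then x else climb t (past_proj x))"
  by auto
termination by (relation "measure (\<lambda>(t, x). t - x)") auto

declare climb.simps [simp del]

lemma le_climb: "x \<le> climb t x"
proof (induction t x rule: climb.induct)
  case (1 t x)
  then show ?case by (subst climb.simps) (auto intro: order_trans)
qed

lemma climb_stop: "t \<le> x \<Longrightarrow> climb t x = x"
  by (subst climb.simps) simp

lemma climb_step: "x < t \<Longrightarrow> 1 \<le> x \<Longrightarrow> x \<le> n \<Longrightarrow> climb t x = climb t (past_proj x)"
  using less_past_proj[of x] by (subst climb.simps) simp

context
  fixes x y t assumes xy: "is_module x y" and t: "t \<le> last_top x y"
begin

lemma climb_zigzag: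
  assumes "q \<le> Suc (pdim x y)"
  shows "\<exists>q'. q \<le> q' \<and> q' \<le> Suc (pdim x y) \<and> even q' = even q \<and> climb t (zigzag x y q) = zigzag x y q'"
  using assms
proof (induction "Suc (pdim x y) - q" arbitrary: q rule: less_induct)
  case less
  show ?case
  proof (cases "t \<le> zigzag x y q")
    case True then show ?thesis using climb_stop less.prems by auto
  next
    case False
    have "q < pdim x y"
    proof (rule ccontr)
      assume "\<not> q < pdim x y"
      then have "last_top x y \<le> zigzag x y q"
        unfolding last_top_def by (intro monoD[OF mono_zigzag[OF xy]]) simp
      then show False using False t by simp
    qed
    then have "climb t (zigzag x y q) = climb t (zigzag x y (Suc (Suc q)))"
      using climb_step[of "zigzag x y q" t] False zigzag_bounds(1)[OF xy] zigzag_le_n[OF xy]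
      by (simp add: zigzag_Suc_Suc)
    moreover have "\<exists>q'. Suc (Suc q) \<le> q' \<and> q' \<le> Suc (pdim x y) \<and> even q' = even (Suc (Suc q)) \<and>
        climb t (zigzag x y (Suc (Suc q))) = zigzag x y q'"
      by (rule less.hyps) (use \<open>q < pdim x y\<close> in auto)
    then obtain q' where "Suc (Suc q) \<le> q'" "q' \<le> Suc (pdim x y)" "even q' = even q"
        "climb t (zigzag x y (Suc (Suc q))) = zigzag x y q'"
      by auto
    ultimately show ?thesis by (metis Suc_leD)
  qed
qed

(* Climbing from x and from y runs through the even, respectively odd, terms of the
   strictly increasing zigzag, so the two climbs never meet. *)
lemma climb_neq: "climb t x \<noteq> climb t y"
proof
  assume eq: "climb t x = climb t y"
  obtain q0 where q0: "q0 \<le> Suc (pdim x y)" "even q0" "climb t x = zigzag x y q0"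
    using climb_zigzag[of 0] by auto
  obtain q1 where q1: "q1 \<le> Suc (pdim x y)" "odd q1" "climb t y = zigzag x y q1"
    using climb_zigzag[of 1] by auto
  have "q0 \<noteq> q1" using q0 q1 by auto
  then show False
    using eq q0 q1 zigzag_strict_mono[OF xy, of q0 q1] zigzag_strict_mono[OF xy, of q1 q0]
    by (cases "q0 < q1") auto
qed

end

lemma climb_hom_perm_neq:
  assumes j: "1 \<le> j" "j \<le> n" and x: "1 \<le> x" "x \<le> j"
  shows "climb (hom_perm n c j) x \<noteq> climb (hom_perm n c j) (Suc j)"
  using x
proof (induction "j - x" arbitrary: x rule: less_induct)
  case less
  let ?t = "hom_perm n c j"
  show ?case
  proof (cases "inj_top j \<le> x")
    case True
    show ?thesis
      by (rule climb_neq[OF is_module_socle[OF j True less.prems(2)]])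
        (rule hom_perm_le_last_top[OF j True less.prems(2)])
  next
    case False
    then have pe: "proj_end c x < j"
      using proj_end_less_of_less_inj_top[OF j] less.prems by simp
    show ?thesis
    proof (cases "?t \<le> x")
      case True
      then show ?thesis using climb_stop[OF True] le_climb[of "Suc j" ?t] less.prems by simp
    next
      case False
      have "x \<le> n" using less.prems j by simp
      then have "climb ?t x = climb ?t (past_proj x)" "past_proj x = Suc (proj_end c x)"
        using climb_step False less.prems past_proj_eq by simp_all
      moreover have "climb ?t (past_proj x) \<noteq> climb ?t (Suc j)"
        using less.hyps[of "past_proj x"] less_past_proj[of x] less.prems pe \<open>x \<le> n\<close> calculation(2)
        by simp
      ultimately show ?thesis by simp
    qed
  qed
qed

definition cartan_entry :: "nat \<Rightarrow> nat \<Rightarrow> rat" where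
  "cartan_entry v s = of_bool (s \<le> v \<and> v \<le> proj_end c s)"

lemma cartan_index: "r < n \<Longrightarrow> s < n \<Longrightarrow> cartan n c $$ (r, s) = cartan_entry (Suc r) (Suc s)"
  unfolding cartan_def cartan_entry_def by simp

(* The k-th term of the minimal projective resolution of (x, y) is P(zigzag x y k), so this is
   the coordinate at P(s) of the dimension vector of (x, y) in the basis of projectives. *)
definition res_coeff :: "nat \<Rightarrow> nat \<Rightarrow> nat \<Rightarrow> rat" where
  "res_coeff x y s = (\<Sum>k\<le>pdim x y. (-1) ^ k * of_bool (zigzag x y k = s))"

context
  fixes x y assumes xy: "is_module x y"
begin

lemma cartan_res_coeff:
  "(\<Sum>s=1..n. cartan_entry w s * res_coeff x y s) = of_bool (x \<le> w \<and> w < y)"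
proof -
  define g :: "nat \<Rightarrow> rat" where "g k = of_bool (zigzag x y k \<le> w \<and> w < zigzag x y (Suc k))" for k
  have entry: "cartan_entry w (zigzag x y k) = g k + g (Suc k)" if k: "k \<le> pdim x y" for k
  proof -
    have "proj_end c (zigzag x y k) = zigzag x y (Suc (Suc k)) - 1"
      using past_proj_eq[of "zigzag x y k"] zigzag_bounds(1)[OF xy] zigzag_le_n[OF xy k]
      by (simp add: zigzag_Suc_Suc)
    then show ?thesis
      using zigzag_le_Suc[OF xy, of k] zigzag_le_Suc[OF xy, of "Suc k"] zigzag_bounds(1)[OF xy, of "Suc (Suc k)"]
      unfolding cartan_entry_def g_def by auto
  qed
  have range: "zigzag x y k \<in> {1..n}" if "k \<le> pdim x y" for k
    using zigzag_bounds(1)[OF xy] zigzag_le_n[OF xy that] by simp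
  have "(\<Sum>s=1..n. cartan_entry w s * res_coeff x y s)
      = (\<Sum>k\<le>pdim x y. \<Sum>s=1..n. (-1) ^ k * of_bool (zigzag x y k = s) * cartan_entry w s)"
    unfolding res_coeff_def sum_distrib_left
    by (subst sum.swap) (simp add: mult_ac)
  also have "\<dots> = (\<Sum>k\<le>pdim x y. (-1) ^ k * (g k + g (Suc k)))"
  proof (intro sum.cong refl)
    fix k assume "k \<in> {..pdim x y}"
    then have k: "k \<le> pdim x y" by simp
    have "(\<Sum>s=1..n. (-1) ^ k * of_bool (zigzag x y k = s) * cartan_entry w s)
        = (\<Sum>s=1..n. if zigzag x y k = s then (-1) ^ k * cartan_entry w (zigzag x y k) else 0)"
      by (intro sum.cong) auto
    then show "(\<Sum>s=1..n. (-1) ^ k * of_bool (zigzag x y k = s) * cartan_entry w s)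
        = (-1) ^ k * (g k + g (Suc k))"
      using range[OF k] entry[OF k] by simp
  qed
  also have "\<dots> = g 0 + (-1) ^ pdim x y * g (Suc (pdim x y))"
    by (rule sum_alternating_telescope)
  also have "\<dots> = of_bool (x \<le> w \<and> w < y)"
    using zigzag_stalls_at_pdim[OF xy] unfolding g_def by simp
  finally show ?thesis .
qed

lemma res_coeff_eq_0:
  assumes "last_top x y < s"
  shows "res_coeff x y s = 0"
  unfolding res_coeff_def
proof (intro sum.neutral ballI)
  fix k assume "k \<in> {..pdim x y}"
  then have "zigzag x y k \<le> last_top x y"
    unfolding last_top_def by (intro monoD[OF mono_zigzag[OF xy]]) simp
  then show "(-1) ^ k * of_bool (zigzag x y k = s) = (0 :: rat)" using assms by simp
qed

lemma res_coeff_last_top: "res_coeff x y (last_top x y) = (-1) ^ pdim x y"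
proof -
  have "zigzag x y k \<noteq> last_top x y" if "k < pdim x y" for k
    using zigzag_strict_mono[OF xy that] unfolding last_top_def by simp
  then have "res_coeff x y (last_top x y) = (\<Sum>k\<le>pdim x y. if k = pdim x y then (-1) ^ k else 0)"
    unfolding res_coeff_def last_top_def
    by (intro sum.cong) (auto simp: order_le_less)
  then show ?thesis by simp
qed

lemma pairing_dim_vector:
  fixes \<eta> :: "nat \<Rightarrow> rat"
  assumes vanish: "\<And>s. 1 \<le> s \<Longrightarrow> s < last_top x y \<Longrightarrow> (\<Sum>v=1..n. \<eta> v * cartan_entry v s) = 0"
  shows "(\<Sum>v=1..n. \<eta> v * of_bool (x \<le> v \<and> v < y))
    = res_coeff x y (last_top x y) * (\<Sum>v=1..n. \<eta> v * cartan_entry v (last_top x y))"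
proof -
  let ?t = "last_top x y"
  have "(\<Sum>v=1..n. \<eta> v * of_bool (x \<le> v \<and> v < y))
      = (\<Sum>s=1..n. res_coeff x y s * (\<Sum>v=1..n. \<eta> v * cartan_entry v s))"
    unfolding cartan_res_coeff[symmetric] sum_distrib_left
    by (subst sum.swap) (simp add: mult_ac)
  also have "\<dots> = (\<Sum>s\<in>{?t}. res_coeff x y s * (\<Sum>v=1..n. \<eta> v * cartan_entry v s))"
  proof (rule sum.mono_neutral_cong_right)
    show "\<forall>s\<in>{1..n} - {?t}. res_coeff x y s * (\<Sum>v=1..n. \<eta> v * cartan_entry v s) = 0"
      using vanish res_coeff_eq_0 by (auto simp: neq_iff)
  qed (use last_top_bounds[OF xy] in auto)
  finally show ?thesis by simp
qed

end

lemma cartan_entry_telescope: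
  assumes "1 \<le> s" "s \<le> n"
  shows "(\<Sum>v=1..n. (of_bool (D (Suc v)) - of_bool (D v)) * cartan_entry v s)
    = of_bool (D (Suc (proj_end c s))) - of_bool (D s)"
proof -
  have "{s..proj_end c s} \<subseteq> {1..n}" using assms proj_end_le_n by auto
  then have "(\<Sum>v=1..n. (of_bool (D (Suc v)) - of_bool (D v)) * cartan_entry v s)
      = (\<Sum>v=s..proj_end c s. of_bool (D (Suc v)) - of_bool (D v) :: rat)"
    by (intro sum.mono_neutral_cong_right) (auto simp: cartan_entry_def)
  also have "\<dots> = of_bool (D (Suc (proj_end c s))) - of_bool (D s)"
    using le_proj_end[OF assms] by (intro sum_Suc_diff) simp
  finally show ?thesis .
qed

definition climb_functional :: "nat \<Rightarrow> nat \<Rightarrow> nat \<Rightarrow> rat" where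
  "climb_functional t j v =
    of_bool (climb t (Suc v) = climb t (Suc j)) - of_bool (climb t v = climb t (Suc j))"

lemma climb_functional_cartan:
  assumes "1 \<le> s" "s < t" "t \<le> n"
  shows "(\<Sum>v=1..n. climb_functional t j v * cartan_entry v s) = 0"
proof -
  have "climb t (Suc (proj_end c s)) = climb t s"
    using climb_step[of s t] past_proj_eq[of s] assms by simp
  then show ?thesis
    using cartan_entry_telescope[of s "\<lambda>v. climb t v = climb t (Suc j)"] assms
    unfolding climb_functional_def by simp
qed

(* If h(S(i)) = h(S(j)) = t with i < j, then climb_functional t j kills the Cartan columns below t
   and the dimension vector of N S(i), but not that of N S(j); by pairing_dim_vector this is
   impossible. *)
lemma hom_perm_neq:
  assumes i: "1 \<le> i" "i < j" and j: "j \<le> n"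
  shows "hom_perm n c i \<noteq> hom_perm n c j"
proof
  assume eq: "hom_perm n c i = hom_perm n c j"
  define t where "t = hom_perm n c j"
  define \<eta> where "\<eta> = climb_functional t j"
  define E where "E = (\<Sum>v=1..n. \<eta> v * cartan_entry v t)"
  have j1: "1 \<le> j" using i by simp
  have t: "t \<le> n" using hom_perm_bounds[OF j1 j] by (simp add: t_def)
  have climb_neq: "climb t v \<noteq> climb t (Suc j)" if "1 \<le> v" "v \<le> j" for v
    using climb_hom_perm_neq[OF j1 j that] unfolding t_def .
  have \<eta>_below: "\<eta> v = 0" if "1 \<le> v" "v < j" for v
    using climb_neq[of v] climb_neq[of "Suc v"] that unfolding \<eta>_def climb_functional_def by simp
  have \<eta>_j: "\<eta> j = 1"
    using climb_neq[of j] j1 unfolding \<eta>_def climb_functional_def by simp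
  have pairing: "(\<Sum>v=1..n. \<eta> v * of_bool (N_top k \<le> v \<and> v < Suc k)) = res_coeff (N_top k) (Suc k) t * E"
    if k: "1 \<le> k" "k \<le> n" "hom_perm n c k = t" for k
    using pairing_dim_vector[OF is_module_socle[OF k(1,2) N_top_bounds[OF k(1,2)]]]
      climb_functional_cartan[OF _ _ t] k
    unfolding E_def \<eta>_def hom_perm_eq_last_top[OF k(1,2)] by simp
  have "(\<Sum>v=1..n. \<eta> v * of_bool (N_top i \<le> v \<and> v < Suc i)) = 0"
    using \<eta>_below i by (intro sum.neutral) auto
  moreover have "res_coeff (N_top i) (Suc i) t \<noteq> 0"
    using res_coeff_last_top[OF is_module_socle[OF i(1) _ N_top_bounds]] hom_perm_eq_last_top[OF i(1)] i j eq
    unfolding t_def by simp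
  ultimately have "E = 0" using pairing[of i] i j eq t_def by simp
  moreover have "(\<Sum>v=1..n. \<eta> v * of_bool (N_top j \<le> v \<and> v < Suc j)) = 1"
    using \<eta>_below \<eta>_j N_top_bounds[OF j1 j] j1 j by (subst sum_eq_single[of _ j]) auto
  ultimately show False using pairing[of j] j1 j t_def by simp
qed

lemma hom_perm_permutes: "hom_perm n c permutes {1..n}"
proof (rule inj_imp_permutes)
  show "inj_on (hom_perm n c) {1..n}"
  proof (rule inj_onI, rule ccontr)
    fix x y assume "x \<in> {1..n}" "y \<in> {1..n}" "hom_perm n c x = hom_perm n c y" "x \<noteq> y"
    then show False using hom_perm_neq[of x y] hom_perm_neq[of y x] by (auto simp: neq_iff)
  qed
  show "hom_perm n c x \<in> {1..n}" if "x \<in> {1..n}" for x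
    using hom_perm_bounds that by simp
  show "hom_perm n c x = x" if "x \<notin> {1..n}" for x
    using that unfolding hom_perm_def by auto
qed simp

section \<open>The Bruhat decomposition of the Coxeter matrix\<close>

(* Column s belongs to j = s + 1: the coordinates of the dimension vector of N S(j) in the basis
   of projectives, and that dimension vector. *)
definition N_res_mat :: "rat mat" where
  "N_res_mat = mat n n (\<lambda>(r, s). res_coeff (N_top (Suc s)) (Suc (Suc s)) (Suc r))"

definition N_dim_mat :: "rat mat" where
  "N_dim_mat = mat n n (\<lambda>(r, s). of_bool (N_top (Suc s) \<le> Suc r \<and> r \<le> s))"

lemma cartan_carrier: "cartan n c \<in> carrier_mat n n"
  unfolding cartan_def by simp

lemma cartan_mult_N_res_mat: "cartan n c * N_res_mat = N_dim_mat"
proof (rule eq_matI)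
  fix r s assume "r < dim_row N_dim_mat" "s < dim_col N_dim_mat"
  then have r: "r < n" and s: "s < n" unfolding N_dim_mat_def by simp_all
  have "(cartan n c * N_res_mat) $$ (r, s)
      = (\<Sum>k<n. cartan_entry (Suc r) (Suc k) * res_coeff (N_top (Suc s)) (Suc (Suc s)) (Suc k))"
    using mult_mat_index_sum[OF cartan_carrier _ r s, of N_res_mat] r s
    by (simp add: N_res_mat_def cartan_index)
  also have "\<dots> = (\<Sum>k=1..n. cartan_entry (Suc r) k * res_coeff (N_top (Suc s)) (Suc (Suc s)) k)"
    by (simp add: sum.atLeast1_atMost_eq)
  also have "\<dots> = N_dim_mat $$ (r, s)"
    using cartan_res_coeff[OF is_module_socle[OF _ _ N_top_bounds]] r s by (auto simp: N_dim_mat_def)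
  finally show "(cartan n c * N_res_mat) $$ (r, s) = N_dim_mat $$ (r, s)" .
qed (simp_all add: cartan_def N_res_mat_def N_dim_mat_def)

lemma N_dim_mat_upper_triangular:
  "upper_triangular N_dim_mat" "\<And>i. i < n \<Longrightarrow> N_dim_mat $$ (i, i) = 1"
  using N_top_bounds(2) by (auto simp: N_dim_mat_def intro!: upper_triangularI)

lemma transpose_cartan_upper_triangular: "upper_triangular (transpose_mat (cartan n c))"
  by (auto simp: cartan_def intro!: upper_triangularI)

lemma cartan_diag: "i < n \<Longrightarrow> cartan n c $$ (i, i) = 1"
  using le_proj_end by (simp add: cartan_def)

lemma N_res_mat_factor:
  obtains T where "T \<in> carrier_mat n n" "upper_triangular T" "\<And>i. i < n \<Longrightarrow> T $$ (i, i) \<noteq> 0"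
    "N_res_mat = T * perm_matrix n (hom_perm n c)"
proof (rule upper_triangular_perm_matrix_factor[OF _ hom_perm_permutes])
  fix s assume s: "s < n"
  have N: "is_module (N_top (Suc s)) (Suc (Suc s))" and
    last: "hom_perm n c (Suc s) = last_top (N_top (Suc s)) (Suc (Suc s))"
    using is_module_socle[OF _ _ N_top_bounds] hom_perm_eq_last_top s by simp_all
  show "N_res_mat $$ (r, s) = 0" if "r < n" "hom_perm n c (Suc s) \<le> r" for r
    using res_coeff_eq_0[OF N] that s last by (simp add: N_res_mat_def)
  show "N_res_mat $$ (hom_perm n c (Suc s) - 1, s) \<noteq> 0"
    using res_coeff_last_top[OF N] last_top_bounds[OF N] s last by (simp add: N_res_mat_def)
qed (auto simp: N_res_mat_def)

lemma bruhat_perm_coxeter: "bruhat_perm n (coxeter n c) (hom_perm n c)"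
proof -
  obtain T where T: "T \<in> carrier_mat n n" "upper_triangular T" "\<And>i. i < n \<Longrightarrow> T $$ (i, i) \<noteq> 0"
    and res: "N_res_mat = T * perm_matrix n (hom_perm n c)"
    using N_res_mat_factor by blast
  have "N_dim_mat \<in> carrier_mat n n" by (simp add: N_dim_mat_def)
  then show ?thesis
    unfolding coxeter_def
    using bruhat_perm_neg_transpose_mult_mat_inv[OF cartan_carrier transpose_cartan_upper_triangular
        _ hom_perm_permutes T] cartan_diag N_dim_mat_upper_triangular cartan_mult_N_res_mat res
    by simp
qed

end

theorem mainTheorem4:
  fixes n :: nat and c :: "nat \<Rightarrow> nat"
  assumes "linear_nakayama n c"
  shows "coxeter_perm n c = hom_perm n c"
proof -
  interpret lin_nakayama n c by (rule lin_nakayama.intro[OF assms])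
  show ?thesis
    unfolding coxeter_perm_def
  proof (rule the_equality)
    show "bruhat_perm n (coxeter n c) (hom_perm n c)" by (rule bruhat_perm_coxeter)
    show "p = hom_perm n c" if "bruhat_perm n (coxeter n c) p" for p
      by (rule bruhat_perm_unique[OF that bruhat_perm_coxeter])
  qed
qed

end
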